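(* Let $Q$ be an automorphic loop and for $x\in Q$ define $P_x=R_x^{-1}L_{x^{-1}}$ (equivalently $P_x=R_x^{-1}R_x^J$, where $R_x^J=J^{-1}R_xJ$ and $J$ is inversion). Then for all $a,b\in Q$ we have $P_aP_bP_a=P_c$ where $c=b\,L_{a^{-1}}^{-1}R_a$. Moreover, $P_a^n=P_{a^n}$ for all $a\in Q$ and all integers $n$.
   Context: A loop is a set with a binary operation in which left and right division are uniquely solvable and which has a neutral element $1$. $R_a:x\mapsto xa$, $L_a:x\mapsto ax$; $\mathrm{Mlt}(Q)=\langle R_x,L_x\mid x\in Q\rangle$; $\mathrm{Inn}(Q)$ is the stabilizer of $1$ in $\mathrm{Mlt}(Q)$. $Q$ is automorphic if $\mathrm{Inn}(Q)\le\mathrm{Aut}(Q)$. Automorphic loops are power-associative (each element generates a cyclic group), so $x^{-1}$ and $a^n$ are well defined; $J:x\mapsto x^{-1}$. Maps act on the right and are composed left to right: $x(fg)=(xf)g$, and $xf$ denotes the image of $x$ under $f$. *)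

theory Defs
  imports Main
begin

definition loop :: "('a \<Rightarrow> 'a \<Rightarrow> 'a) \<Rightarrow> 'a \<Rightarrow> bool" where
  "loop m e \<longleftrightarrow>
     (\<forall>a b. \<exists>!x. m a x = b) \<and> (\<forall>a b. \<exists>!y. m y a = b) \<and>
     (\<forall>x. m e x = x \<and> m x e = x)"

definition Rt :: "('a \<Rightarrow> 'a \<Rightarrow> 'a) \<Rightarrow> 'a \<Rightarrow> 'a \<Rightarrow> 'a" where
  "Rt m a = (\<lambda>x. m x a)"

definition Lt :: "('a \<Rightarrow> 'a \<Rightarrow> 'a) \<Rightarrow> 'a \<Rightarrow> 'a \<Rightarrow> 'a" where
  "Lt m a = (\<lambda>x. m a x)"

inductive_set Mlt :: "('a \<Rightarrow> 'a \<Rightarrow> 'a) \<Rightarrow> ('a \<Rightarrow> 'a) set" for m where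
  Mlt_id: "id \<in> Mlt m"
| Mlt_R: "f \<in> Mlt m \<Longrightarrow> Rt m x \<circ> f \<in> Mlt m"
| Mlt_Rinv: "f \<in> Mlt m \<Longrightarrow> inv (Rt m x) \<circ> f \<in> Mlt m"
| Mlt_L: "f \<in> Mlt m \<Longrightarrow> Lt m x \<circ> f \<in> Mlt m"
| Mlt_Linv: "f \<in> Mlt m \<Longrightarrow> inv (Lt m x) \<circ> f \<in> Mlt m"

definition Inn :: "('a \<Rightarrow> 'a \<Rightarrow> 'a) \<Rightarrow> 'a \<Rightarrow> ('a \<Rightarrow> 'a) set" where
  "Inn m e = {f \<in> Mlt m. f e = e}"

definition is_aut :: "('a \<Rightarrow> 'a \<Rightarrow> 'a) \<Rightarrow> ('a \<Rightarrow> 'a) \<Rightarrow> bool" where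
  "is_aut m f \<longleftrightarrow> bij f \<and> (\<forall>x y. f (m x y) = m (f x) (f y))"

definition automorphic_loop :: "('a \<Rightarrow> 'a \<Rightarrow> 'a) \<Rightarrow> 'a \<Rightarrow> bool" where
  "automorphic_loop m e \<longleftrightarrow> loop m e \<and> (\<forall>f \<in> Inn m e. is_aut m f)"

text \<open>Inverse x^{-1} (taken as the right inverse; two-sided in automorphic loops).\<close>
definition loop_inv :: "('a \<Rightarrow> 'a \<Rightarrow> 'a) \<Rightarrow> 'a \<Rightarrow> 'a \<Rightarrow> 'a" where
  "loop_inv m e x = (THE y. m x y = e)"

primrec npow :: "('a \<Rightarrow> 'a \<Rightarrow> 'a) \<Rightarrow> 'a \<Rightarrow> 'a \<Rightarrow> nat \<Rightarrow> 'a" where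
  "npow m e a 0 = e"
| "npow m e a (Suc n) = m (npow m e a n) a"

definition ipow :: "('a \<Rightarrow> 'a \<Rightarrow> 'a) \<Rightarrow> 'a \<Rightarrow> 'a \<Rightarrow> int \<Rightarrow> 'a" where
  "ipow m e a n = (if 0 \<le> n then npow m e a (nat n) else npow m e (loop_inv m e a) (nat (- n)))"

text \<open>P_x = R_x^{-1} L_{x^{-1}} (maps act on the right, composed left to right),
  i.e. as a function: apply R_x^{-1} first, then L_{x^{-1}}.\<close>
definition Pmap :: "('a \<Rightarrow> 'a \<Rightarrow> 'a) \<Rightarrow> 'a \<Rightarrow> 'a \<Rightarrow> 'a \<Rightarrow> 'a" where
  "Pmap m e x = Lt m (loop_inv m e x) \<circ> inv (Rt m x)"

definition fpow :: "('a \<Rightarrow> 'a) \<Rightarrow> int \<Rightarrow> 'a \<Rightarrow> 'a" where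
  "fpow f n = (if 0 \<le> n then f ^^ nat n else inv f ^^ nat (- n))"

end

theory Submission
  imports Defs
begin

text \<open>Inner mappings of an automorphic loop are automorphisms and therefore commute with the
inversion J. Evaluating a few inner mappings at well-chosen points, namely
z |-> x\z x, z |-> x (x^-1 z), z |-> x (z x^-1), z |-> (xy)\(x(yz)) and z |-> (z/c)/c^-1,
gives the antiautomorphic inverse property (xy)^-1 = y^-1 x^-1. With it, every g in Mlt(Q)
satisfies g^-1 J g J = P_(1g) (maps acting on the right): write g = h R_(1g) with h inner.
Taking g = R_b L_(a^-1)^-1 R_a gives P_a P_b P_a = P_c, taking g = L_(a^-1) gives
P_a^-1 = P_(a^-1), and the power formula follows by induction in steps of two, because
a^-1 \ a^k = a^(k+1): inner mappings fixing a fix all powers of a.\<close>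

locale loop_ops =
  fixes m :: "'a \<Rightarrow> 'a \<Rightarrow> 'a" (infixl "\<cdot>" 70) and e :: 'a
  assumes loop: "loop m e"
begin

abbreviation ldiv :: "'a \<Rightarrow> 'a \<Rightarrow> 'a" (infixl "\<setminus>" 70)
  where "a \<setminus> b \<equiv> inv (Lt m a) b"

abbreviation rdiv :: "'a \<Rightarrow> 'a \<Rightarrow> 'a" (infixl "\<sslash>" 70)
  where "b \<sslash> a \<equiv> inv (Rt m a) b"

abbreviation J :: "'a \<Rightarrow> 'a" where "J \<equiv> loop_inv m e"

lemma bij_Lt: "bij (Lt m a)"
proof -
  have "\<exists>!x. a \<cdot> x = b" for b using loop unfolding loop_def by blast
  then show ?thesis unfolding bij_iff Lt_def by simp
qed

lemma bij_Rt: "bij (Rt m a)"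
proof -
  have "\<exists>!y. y \<cdot> a = b" for b using loop unfolding loop_def by blast
  then show ?thesis unfolding bij_iff Rt_def by simp
qed

lemma Lt_apply [simp]: "Lt m a x = a \<cdot> x"
  by (simp add: Lt_def)

lemma Rt_apply [simp]: "Rt m a x = x \<cdot> a"
  by (simp add: Rt_def)

lemma ldiv_mult [simp]: "a \<setminus> (a \<cdot> x) = x"
  using inv_f_f[OF bij_is_inj[OF bij_Lt]] by simp

lemma mult_ldiv [simp]: "a \<cdot> (a \<setminus> b) = b"
  using surj_f_inv_f[OF bij_is_surj[OF bij_Lt]] by simp

lemma rdiv_mult [simp]: "(y \<cdot> a) \<sslash> a = y"
  using inv_f_f[OF bij_is_inj[OF bij_Rt]] by simp

lemma mult_rdiv [simp]: "(b \<sslash> a) \<cdot> a = b"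
  using surj_f_inv_f[OF bij_is_surj[OF bij_Rt]] by simp

lemma e_mult [simp]: "e \<cdot> x = x" and mult_e [simp]: "x \<cdot> e = x"
  using loop unfolding loop_def by blast+

lemma ldiv_eqI: "a \<cdot> x = b \<Longrightarrow> a \<setminus> b = x"
  by auto

lemma ldiv_self [simp]: "a \<setminus> a = e"
  using ldiv_mult[of a e] by simp

lemma rdiv_e_right [simp]: "a \<sslash> e = a"
  by (metis mult_e rdiv_mult)

lemma rdiv_self [simp]: "a \<sslash> a = e"
  by (metis e_mult rdiv_mult)

lemma mult_J [simp]: "x \<cdot> J x = e"
proof -
  have "\<exists>!y. x \<cdot> y = e" using loop unfolding loop_def by blast
  then show ?thesis unfolding loop_inv_def by (rule theI')
qed

lemma J_eqI: "x \<cdot> y = e \<Longrightarrow> J x = y"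
  using ldiv_mult mult_J by metis

lemma J_e [simp]: "J e = e"
  by (rule J_eqI) simp

lemma ldiv_e [simp]: "a \<setminus> e = J a"
  using ldiv_mult[of a "J a"] by simp

lemma bij_Mlt: "f \<in> Mlt m \<Longrightarrow> bij f"
  by (induction rule: Mlt.induct) (blast intro: bij_id bij_comp bij_Lt bij_Rt bij_imp_bij_inv)+

end

locale automorphic = loop_ops +
  assumes inner_aut: "f \<in> Inn m e \<Longrightarrow> is_aut m f"
begin

lemma inner_mult: "f \<in> Mlt m \<Longrightarrow> f e = e \<Longrightarrow> f (x \<cdot> y) = f x \<cdot> f y"
  using inner_aut unfolding Inn_def is_aut_def by blast

lemma inner_J: "f \<in> Mlt m \<Longrightarrow> f e = e \<Longrightarrow> f (J x) = J (f x)"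
  using inner_mult[of f x "J x"] by (metis J_eqI mult_J)

lemma J_mult_self [simp]: "J x \<cdot> x = e"
proof -
  let ?T = "inv (Lt m x) \<circ> (Rt m x \<circ> id)"
  have "?T \<in> Mlt m" by (intro Mlt.intros)
  moreover have "?T e = e" by simp
  ultimately have "?T (J x) = J (?T x)" by (rule inner_J)
  then have "x \<setminus> (J x \<cdot> x) = x \<setminus> (x \<cdot> J x)" by simp
  then show ?thesis by (metis mult_J mult_ldiv)
qed

lemma J_J [simp]: "J (J x) = x"
  by (rule J_eqI) simp

lemma rdiv_e [simp]: "e \<sslash> a = J a"
  by (metis J_mult_self e_mult rdiv_mult)

lemma flexible: "(x \<cdot> y) \<cdot> x = x \<cdot> (y \<cdot> x)"
proof -
  let ?T = "inv (Lt m x) \<circ> (Rt m x \<circ> id)"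
  have "?T \<in> Mlt m" by (intro Mlt.intros)
  moreover have "?T e = e" by simp
  ultimately have "?T (x \<cdot> y) = ?T x \<cdot> ?T y" by (rule inner_mult)
  then have "x \<setminus> ((x \<cdot> y) \<cdot> x) = y \<cdot> x" by simp
  then show ?thesis by (metis mult_ldiv)
qed

lemma ldiv_mult_right: "a \<setminus> (w \<cdot> a) = (a \<setminus> w) \<cdot> a"
  by (metis flexible ldiv_mult mult_ldiv)

lemma mult_J_left_commute: "x \<cdot> (J x \<cdot> z) = J x \<cdot> (x \<cdot> z)"
proof -
  let ?K = "Lt m x \<circ> (Lt m (J x) \<circ> id)"
  have "?K \<in> Mlt m" by (intro Mlt.intros)
  moreover have "?K e = e" by simp
  ultimately have "?K (x \<cdot> z) = ?K x \<cdot> ?K z" by (rule inner_mult)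
  then have "x \<cdot> (J x \<cdot> (x \<cdot> z)) = x \<cdot> (x \<cdot> (J x \<cdot> z))" by simp
  then show ?thesis by (metis ldiv_mult)
qed

lemma mult_J_assoc: "(x \<cdot> z) \<cdot> J x = x \<cdot> (z \<cdot> J x)"
proof -
  let ?E = "Rt m (J x) \<circ> (Lt m x \<circ> id)"
  have "?E \<in> Mlt m" by (intro Mlt.intros)
  moreover have "?E e = e" by simp
  ultimately have "?E (z \<cdot> J x) = ?E z \<cdot> ?E (J x)" by (rule inner_mult)
  then have "(x \<cdot> (z \<cdot> J x)) \<cdot> J x = ((x \<cdot> z) \<cdot> J x) \<cdot> J x" by simp
  then show ?thesis by (metis rdiv_mult)
qed

lemma J_mult_mult_J: "J (x \<cdot> (z \<cdot> J x)) = x \<cdot> (J z \<cdot> J x)"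
proof -
  let ?E = "Lt m x \<circ> (Rt m (J x) \<circ> id)"
  have "?E \<in> Mlt m" by (intro Mlt.intros)
  moreover have "?E e = e" by simp
  ultimately have "?E (J z) = J (?E z)" by (rule inner_J)
  then show ?thesis by simp
qed

lemma J_rdiv_rdiv: "J ((w \<sslash> c) \<sslash> J c) = (J w \<sslash> c) \<sslash> J c"
proof -
  let ?S = "inv (Rt m (J c)) \<circ> (inv (Rt m c) \<circ> id)"
  have "?S \<in> Mlt m" by (intro Mlt.intros)
  moreover have "?S e = e" by simp
  ultimately have "?S (J w) = J (?S w)" by (rule inner_J)
  then show ?thesis by simp
qed

lemma ldiv_J_mult: "a \<setminus> J (a \<cdot> b) = J (b \<cdot> a) \<sslash> a"
proof -
  let ?T = "inv (Lt m a) \<circ> (Rt m a \<circ> id)"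
  have "?T \<in> Mlt m" by (intro Mlt.intros)
  moreover have "?T e = e" by simp
  ultimately have "?T (J (a \<cdot> b)) = J (?T (a \<cdot> b))" by (rule inner_J)
  then have "(a \<setminus> J (a \<cdot> b)) \<cdot> a = J (b \<cdot> a)" by (simp add: flexible ldiv_mult_right)
  then show ?thesis by (metis rdiv_mult)
qed

lemma ldiv_mult_J: "((x \<cdot> y) \<setminus> x) \<cdot> J (x \<cdot> y) = (x \<cdot> y) \<setminus> (x \<cdot> (J y \<cdot> J x))"
proof -
  let ?L = "inv (Lt m (x \<cdot> y)) \<circ> (Lt m x \<circ> (Lt m y \<circ> id))"
  have "?L \<in> Mlt m" by (intro Mlt.intros)
  moreover have "?L e = e" by simp
  ultimately have "?L (J y \<cdot> (y \<setminus> J x)) = ?L (J y) \<cdot> ?L (y \<setminus> J x)" by (rule inner_mult)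
  then show ?thesis by (simp add: mult_J_left_commute[of y])
qed

text \<open>This is the antiautomorphic inverse property in the form L_c^-1 = J R_(c^-1)^-1 J;
  the proof factors c as x (x\c).\<close>

lemma ldiv_eq_J_rdiv: "c \<setminus> x = J (J x \<sslash> J c)"
proof -
  define y where "y = x \<setminus> c"
  have c: "c = x \<cdot> y" by (simp add: y_def)
  have "(c \<setminus> x) \<cdot> J c = c \<setminus> (x \<cdot> (J y \<cdot> J x))"
    unfolding c by (rule ldiv_mult_J)
  also have "x \<cdot> (J y \<cdot> J x) = J (c \<cdot> J x)"
    by (simp add: c mult_J_assoc J_mult_mult_J)
  also have "c \<setminus> J (c \<cdot> J x) = J (J x \<cdot> c) \<sslash> c"
    by (rule ldiv_J_mult)
  finally have "c \<setminus> x = (J (J x \<cdot> c) \<sslash> c) \<sslash> J c"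
    by (metis rdiv_mult)
  also have "\<dots> = J (J x \<sslash> J c)"
    using J_rdiv_rdiv[where w="J x \<cdot> c" and c=c] by simp
  finally show ?thesis .
qed

lemma J_mult_distrib: "J (x \<cdot> y) = J y \<cdot> J x"
  using ldiv_eq_J_rdiv[of "J y" "J (x \<cdot> y)"] by (metis J_J mult_ldiv rdiv_mult)

lemma J_ldiv: "J (a \<setminus> b) = J b \<sslash> J a"
  by (metis J_mult_distrib mult_ldiv rdiv_mult)

abbreviation P :: "'a \<Rightarrow> 'a \<Rightarrow> 'a" where "P \<equiv> Pmap m e"

lemma Pmap_apply: "P a z = J a \<cdot> (z \<sslash> a)"
  by (simp add: Pmap_def)

lemma bij_Pmap: "bij (P a)"
  unfolding Pmap_def by (intro bij_comp bij_imp_bij_inv bij_Lt bij_Rt)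

lemma Pmap_Mlt:
  assumes g: "g \<in> Mlt m"
  shows "P (g e) = J \<circ> g \<circ> J \<circ> inv g"
proof
  fix z
  let ?h = "inv (Rt m (g e)) \<circ> g"
  have "?h \<in> Mlt m" using g by (rule Mlt.intros)
  moreover have "?h e = e" by simp
  ultimately have h_J: "?h (J w) = J (?h w)" for w by (rule inner_J)
  define w where "w = inv g z"
  have "g w = z" using bij_Mlt[OF g] by (simp add: w_def bij_is_surj surj_f_inv_f)
  then have "g (J w) = J (z \<sslash> g e) \<cdot> g e"
    using h_J[of w] by (metis comp_apply mult_rdiv)
  then show "P (g e) z = (J \<circ> g \<circ> J \<circ> inv g) z"
    by (simp add: Pmap_apply J_mult_distrib w_def)
qed

lemma Pmap_Pmap_Pmap: "P a \<circ> P b \<circ> P a = P ((J a \<setminus> b) \<cdot> a)"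
proof -
  define u where "u = Rt m a \<circ> (inv (Lt m (J a)) \<circ> (Rt m b \<circ> id))"
  have u: "u \<in> Mlt m" unfolding u_def by (intro Mlt.intros)
  have u_apply: "u w = (J a \<setminus> (w \<cdot> b)) \<cdot> a" for w by (simp add: u_def)
  have inv_u: "inv u z = P a z \<sslash> b" for z
    by (rule inv_f_eq[OF bij_is_inj[OF bij_Mlt[OF u]]]) (simp add: u_apply Pmap_apply)
  have "P a \<circ> P b \<circ> P a = J \<circ> u \<circ> J \<circ> inv u"
    by (simp add: fun_eq_iff inv_u u_apply J_mult_distrib J_ldiv Pmap_apply)
  also have "\<dots> = P ((J a \<setminus> b) \<cdot> a)"
    using Pmap_Mlt[OF u] by (simp add: u_apply)
  finally show ?thesis .
qed

lemma inv_Pmap: "inv (P a) = P (J a)"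
proof
  fix z
  have "Lt m (J a) \<circ> id \<in> Mlt m" by (intro Mlt.intros)
  from fun_cong[OF Pmap_Mlt[OF this], of z]
  have "P (J a) z = (J a \<setminus> z) \<cdot> a" by (simp add: J_mult_distrib)
  moreover have "P a ((J a \<setminus> z) \<cdot> a) = z" by (simp add: Pmap_apply)
  ultimately show "inv (P a) z = P (J a) z"
    using inv_f_eq[OF bij_is_inj[OF bij_Pmap]] by metis
qed

lemma inner_fixes_npow: "f \<in> Mlt m \<Longrightarrow> f e = e \<Longrightarrow> f a = a \<Longrightarrow> f (npow m e a k) = npow m e a k"
  by (induction k) (simp_all add: inner_mult)

lemma npow_mult_commute: "npow m e a k \<cdot> a = a \<cdot> npow m e a k"
proof -
  have "inv (Lt m a) \<circ> (Rt m a \<circ> id) \<in> Mlt m" by (intro Mlt.intros)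
  from inner_fixes_npow[OF this] have "a \<setminus> (npow m e a k \<cdot> a) = npow m e a k"
    by simp
  then show ?thesis by (metis mult_ldiv)
qed

lemma J_ldiv_npow: "J a \<setminus> npow m e a k = npow m e a k \<cdot> a"
proof -
  have "Lt m (J a) \<circ> (Lt m a \<circ> id) \<in> Mlt m" by (intro Mlt.intros)
  from inner_fixes_npow[OF this] have "J a \<cdot> (a \<cdot> npow m e a k) = npow m e a k"
    by (simp add: mult_J_left_commute[symmetric])
  then show ?thesis by (simp add: npow_mult_commute ldiv_eqI)
qed

lemma Pmap_e: "P e = id"
  by (simp add: fun_eq_iff Pmap_apply)

lemma funpow_Pmap: "P a ^^ k = P (npow m e a k)"
proof (induction k rule: less_induct)
  case (less k)
  consider "k = 0" | "k = 1" | j where "k = Suc (Suc j)"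
    by (metis One_nat_def not0_implies_Suc)
  then show ?case
  proof cases
    case 3
    have "P a ^^ k = P a \<circ> P a ^^ j \<circ> P a"
      by (metis 3 comp_assoc funpow.simps(2) funpow_Suc_right)
    also have "\<dots> = P a \<circ> P (npow m e a j) \<circ> P a"
      using less 3 by simp
    also have "\<dots> = P (npow m e a k)"
      by (simp add: Pmap_Pmap_Pmap J_ldiv_npow 3)
    finally show ?thesis .
  qed (simp_all add: Pmap_e)
qed

lemma fpow_Pmap: "fpow (P a) n = P (ipow m e a n)"
  by (simp add: fpow_def ipow_def funpow_Pmap inv_Pmap)

end

theorem lemma2p3:
  fixes m :: "'a \<Rightarrow> 'a \<Rightarrow> 'a" and e :: 'a
  assumes "automorphic_loop m e"
  shows "(\<forall>a b. Pmap m e a \<circ> Pmap m e b \<circ> Pmap m e a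
                 = Pmap m e (Rt m a (inv (Lt m (loop_inv m e a)) b)))
       \<and> (\<forall>a (n::int). fpow (Pmap m e a) n = Pmap m e (ipow m e a n))"
proof -
  interpret automorphic m e
    using assms unfolding automorphic_loop_def by unfold_locales blast+
  show ?thesis
    using Pmap_Pmap_Pmap fpow_Pmap by simp
qed

end
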